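(* Let $d\geqslant1$ and let $u_1,\dots,u_d\in\mathbb{Z}^d$ satisfy no nontrivial $\mathbb{Z}$-linear relation. No periodic subset of $\mathbb{Z}^d$ with periods $u_1,\dots,u_d$ has a minimal complement in $\mathbb{Z}^d$.
   Context: $\mathbb{N}=\{0,1,2,\dots\}$, $P=\mathbb{N}u_1+\dots+\mathbb{N}u_d$. A nonempty $X\subseteq\mathbb{Z}^d$ is periodic with periods $u_1,\dots,u_d$ if $X\subseteq F+P$ for some nonempty finite $F\subseteq\mathbb{Z}^d$ and $x+P\subseteq X$ for every $x\in X$. A nonempty $M\subseteq\mathbb{Z}^d$ is a complement of $W$ if $M+W=\mathbb{Z}^d$, and a minimal complement if no proper subset of $M$ is a complement of $W$. *)

theory Defs
  imports "HOL-Analysis.Analysis"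
begin

text \<open>Z^d is modelled as int ^ 'd for a finite index type 'd (d = CARD('d) \<ge> 1).
  The periods u_1,...,u_d are a family u :: 'd \<Rightarrow> int ^ 'd.\<close>

definition sumset :: "('a::plus) set \<Rightarrow> 'a set \<Rightarrow> 'a set" where
  "sumset A B = {a + b | a b. a \<in> A \<and> b \<in> B}"

definition period_cone :: "('d::finite \<Rightarrow> int ^ 'd) \<Rightarrow> (int ^ 'd) set" where
  "period_cone u = {(\<Sum>i\<in>UNIV. int (n i) *s u i) | n :: 'd \<Rightarrow> nat. True}"

definition periodic :: "('d::finite \<Rightarrow> int ^ 'd) \<Rightarrow> (int ^ 'd) set \<Rightarrow> bool" where
  "periodic u X \<longleftrightarrow> X \<noteq> {} \<and>
     (\<exists>F. finite F \<and> F \<noteq> {} \<and> X \<subseteq> sumset F (period_cone u)) \<and>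
     (\<forall>x\<in>X. sumset {x} (period_cone u) \<subseteq> X)"

definition is_complement :: "('a::plus) set \<Rightarrow> 'a set \<Rightarrow> bool" where
  "is_complement M W \<longleftrightarrow> M \<noteq> {} \<and> sumset M W = UNIV"

definition minimal_complement :: "('a::plus) set \<Rightarrow> 'a set \<Rightarrow> bool" where
  "minimal_complement M W \<longleftrightarrow> is_complement M W \<and> (\<forall>M'. M' \<subset> M \<longrightarrow> \<not> is_complement M' W)"

end

theory Submission
  imports Defs
begin

text \<open>Suppose every point w can be pushed out of X by a translation t with X + t \<subseteq> X. Then no
  point m of a complement M of X is needed: choose t with z - m - t \<notin> X; writing z - t = m' + x
  with m' \<in> M and x \<in> X forces m' \<noteq> m, and z = m' + (x + t) with x + t \<in> X. For a periodic set
  with independent periods the translations N u_i do the job: X lies in finitely many translates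
  f + P of the period cone, and by independence the ray w - N u_i meets each of them for only
  finitely many N.\<close>

lemma is_complement_Diff_singleton:
  fixes W :: "'a::ab_group_add set"
  assumes comp: "is_complement M W"
    and escape: "\<And>w. \<exists>t. (\<forall>x\<in>W. x + t \<in> W) \<and> w - t \<notin> W"
  shows "is_complement (M - {m}) W"
proof -
  have cover: "z \<in> sumset (M - {m}) W" for z
  proof -
    obtain t where inv: "\<forall>x\<in>W. x + t \<in> W" and out: "z - m - t \<notin> W"
      using escape by blast
    have "z - t \<in> sumset M W"
      using comp by (simp add: is_complement_def)
    then obtain m' x' where "m' \<in> M" "x' \<in> W" and zt: "z - t = m' + x'"
      unfolding sumset_def by blast
    moreover have "m' \<noteq> m"
      using zt out \<open>x' \<in> W\<close> by (auto simp: algebra_simps)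
    moreover have "z = m' + (x' + t)"
      using zt by (simp add: algebra_simps)
    ultimately show ?thesis
      using inv unfolding sumset_def by blast
  qed
  then have "M - {m} \<noteq> {}"
    unfolding sumset_def by blast
  with cover show ?thesis
    unfolding is_complement_def by blast
qed

lemma not_minimal_complement_if_escaping:
  fixes W :: "'a::ab_group_add set"
  assumes escape: "\<And>w. \<exists>t. (\<forall>x\<in>W. x + t \<in> W) \<and> w - t \<notin> W"
  shows "\<not> minimal_complement M W"
proof
  assume min: "minimal_complement M W"
  then obtain m where "m \<in> M"
    unfolding minimal_complement_def is_complement_def by blast
  then have "M - {m} \<subset> M" by blast
  moreover have "is_complement (M - {m}) W"
    using min is_complement_Diff_singleton[OF _ escape] unfolding minimal_complement_def by blast
  ultimately show False
    using min unfolding minimal_complement_def by blast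
qed

lemma mem_period_cone_iff:
  "x \<in> period_cone u \<longleftrightarrow> (\<exists>n. x = (\<Sum>i\<in>UNIV. int (n i) *s u i))"
  by (simp add: period_cone_def)

lemma sum_if_vector_scalar_mult:
  fixes u :: "'d::finite \<Rightarrow> 'a::semiring_1 ^ 'd"
  shows "(\<Sum>j\<in>UNIV. (if j = i then c else 0) *s u j) = c *s u i"
proof -
  have "(\<Sum>j\<in>UNIV. (if j = i then c else 0) *s u j) = (\<Sum>j\<in>UNIV. if j = i then c *s u j else 0)"
    by (rule sum.cong) auto
  then show ?thesis
    by simp
qed

lemma vector_scalar_mult_mem_period_cone:
  fixes u :: "'d::finite \<Rightarrow> int ^ 'd"
  shows "int N *s u i \<in> period_cone u"
  unfolding mem_period_cone_iff
  by (intro exI[of _ "\<lambda>j. if j = i then N else 0"]) (simp add: if_distrib[of int] sum_if_vector_scalar_mult cong: if_cong)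

lemma independent_coeffs_unique:
  fixes u :: "'d::finite \<Rightarrow> int ^ 'd"
  assumes indep: "\<And>c :: 'd \<Rightarrow> int. (\<Sum>i\<in>UNIV. c i *s u i) = 0 \<Longrightarrow> (\<forall>i. c i = 0)"
    and eq: "(\<Sum>i\<in>UNIV. a i *s u i) = (\<Sum>i\<in>UNIV. b i *s u i)"
  shows "a = b"
proof -
  have "(\<Sum>i\<in>UNIV. (a i - b i) *s u i) = 0"
    using eq by (simp add: sum_subtractf)
  then show ?thesis
    using indep by fastforce
qed

lemma finite_ray_in_period_cone:
  fixes u :: "'d::finite \<Rightarrow> int ^ 'd"
  assumes indep: "\<And>c :: 'd \<Rightarrow> int. (\<Sum>i\<in>UNIV. c i *s u i) = 0 \<Longrightarrow> (\<forall>i. c i = 0)"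
  shows "finite {N. y - int N *s u i \<in> period_cone u}"
proof (cases "{N. y - int N *s u i \<in> period_cone u} = {}")
  case False
  then obtain N0 n0 where N0: "y - int N0 *s u i = (\<Sum>j\<in>UNIV. int (n0 j) *s u j)"
    unfolding mem_period_cone_iff by blast
  let ?coeff = "\<lambda>M m j. int (m j) + (if j = i then int M else 0)"
  have coeff: "y = (\<Sum>j\<in>UNIV. ?coeff M m j *s u j)"
    if "y - int M *s u i = (\<Sum>j\<in>UNIV. int (m j) *s u j)" for M m
  proof -
    have "y = (\<Sum>j\<in>UNIV. int (m j) *s u j) + int M *s u i"
      using that by (simp add: diff_eq_eq)
    also have "\<dots> = (\<Sum>j\<in>UNIV. ?coeff M m j *s u j)"
      by (simp only: vector_sadd_rdistrib sum.distrib sum_if_vector_scalar_mult)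
    finally show ?thesis .
  qed
  have "N \<le> N0 + n0 i" if "y - int N *s u i \<in> period_cone u" for N
  proof -
    obtain n where n: "y - int N *s u i = (\<Sum>j\<in>UNIV. int (n j) *s u j)"
      using \<open>y - int N *s u i \<in> period_cone u\<close> unfolding mem_period_cone_iff by blast
    have "?coeff N0 n0 = ?coeff N n"
      using independent_coeffs_unique[OF indep trans[OF sym[OF coeff[OF N0]] coeff[OF n]]] .
    then have "?coeff N0 n0 i = ?coeff N n i"
      by (rule fun_cong)
    then have "n0 i + N0 = n i + N"
      by simp
    then show ?thesis
      by simp
  qed
  then have "{N. y - int N *s u i \<in> period_cone u} \<subseteq> {..N0 + n0 i}"
    unfolding atMost_def by blast
  then show ?thesis
    using finite_subset by blast
qed simp

lemma periodic_add_mem: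
  assumes "periodic u X" "x \<in> X" "p \<in> period_cone u"
  shows "x + p \<in> X"
  using assms unfolding periodic_def sumset_def by blast

lemma periodic_escapes_along_period:
  fixes u :: "'d::finite \<Rightarrow> int ^ 'd"
  assumes indep: "\<And>c :: 'd \<Rightarrow> int. (\<Sum>i\<in>UNIV. c i *s u i) = 0 \<Longrightarrow> (\<forall>i. c i = 0)"
    and per: "periodic u X"
  shows "\<exists>N. w - int N *s u i \<notin> X"
proof -
  obtain F where F: "finite F" "X \<subseteq> sumset F (period_cone u)"
    using per unfolding periodic_def by blast
  have "finite (\<Union>f\<in>F. {N. (w - f) - int N *s u i \<in> period_cone u})"
    using F(1) finite_ray_in_period_cone[OF indep] by (intro finite_UN_I)
  then obtain N where N: "N \<notin> (\<Union>f\<in>F. {N. (w - f) - int N *s u i \<in> period_cone u})"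
    by (metis ex_new_if_finite infinite_UNIV_nat)
  have "w - int N *s u i \<notin> sumset F (period_cone u)"
  proof
    assume "w - int N *s u i \<in> sumset F (period_cone u)"
    then obtain f p where "f \<in> F" "p \<in> period_cone u" "w - int N *s u i = f + p"
      unfolding sumset_def by blast
    then have "f \<in> F" "(w - f) - int N *s u i \<in> period_cone u"
      by (simp_all add: algebra_simps)
    with N show False by blast
  qed
  with F(2) show ?thesis by blast
qed

theorem corollary4p11:
  fixes u :: "'d::finite \<Rightarrow> int ^ 'd" and X :: "(int ^ 'd) set"
  assumes indep: "\<And>c :: 'd \<Rightarrow> int. (\<Sum>i\<in>UNIV. c i *s u i) = 0 \<Longrightarrow> (\<forall>i. c i = 0)"
    and per: "periodic u X"
  shows "\<not> (\<exists>M. minimal_complement M X)"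
proof -
  fix i :: 'd
  have "\<exists>t. (\<forall>x\<in>X. x + t \<in> X) \<and> w - t \<notin> X" for w
  proof -
    obtain N where "w - int N *s u i \<notin> X"
      using periodic_escapes_along_period[OF indep per] by blast
    moreover have "\<forall>x\<in>X. x + int N *s u i \<in> X"
      by (simp add: periodic_add_mem[OF per] vector_scalar_mult_mem_period_cone)
    ultimately show ?thesis by blast
  qed
  then show ?thesis
    by (meson not_minimal_complement_if_escaping)
qed

end
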